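(* The smallest eigenvalue of $P_{DC}^N=\tilde{\Pi}^N P_{DC} \tilde{\Pi}^N$ is \begin{equation*} \lambda^N_{\mathrm{min}}=\begin{cases} \frac{1}{2} -\frac{1}{2} \sqrt{(2p_{z}-1)^2+8\cdot 2^{-N}(p_{z}-p_{z}^2)} & N \text{ odd},\\ \frac{1}{2} -\frac{1}{2} \sqrt{(2p_{z}-1)^2+16\cdot 2^{-N}(p_{z}-p_{z}^2)} & N \text{ even}. \end{cases} \end{equation*}
   Context: Bob uses active basis choice with perfect-efficiency threshold detectors on a two-polarization-mode Fock space $\mathcal{H}_B$. His double-click POVM element in the $H/V$ basis is $P_{H/V} = \sum_{n_V=1}^\infty \sum_{n_H=1}^\infty |n_H,n_V\rangle\langle n_H,n_V|$, and $P_{D/A}$ is defined analogously in the diagonal/anti-diagonal basis. With $H/V$ chosen with probability $p_z$, the total double-click POVM is $P_{DC} = p_{z} P_{H/V}+ (1-p_{z}) P_{D/A}$. For $N=0,1,2,\dots$, the projector onto the total $N$-photon subspace is $\tilde{\Pi}^N = \sum_{n=0}^N |n,N-n\rangle\langle n,N-n|_{H/V}=\sum_{n=0}^N |n,N-n\rangle\langle n,N-n|_{D/A}$; $P_{DC}$ is block-diagonal with respect to these projectors. *)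

theory Defs
  imports "Jordan_Normal_Form.Matrix" "Jordan_Normal_Form.Char_Poly"
begin

text \<open>The total N-photon subspace is (N+1)-dimensional, with orthonormal H/V Fock basis
  |n, N-n>_{H/V}, n = 0..N; basis index n = number of H photons.
  All operators below are the matrices of the N-photon blocks in this basis.\<close>

text \<open>Amplitude <n, N-n|_{H/V} |k, N-k>_{D/A}, where the D/A modes are
  a_D = (a_H + a_V)/sqrt 2 and a_A = (a_H - a_V)/sqrt 2, so that
  |k,N-k>_{D/A} = (a_D^dag)^k (a_A^dag)^(N-k) / sqrt(k! (N-k)!) |vac>.\<close>
definition da_amp :: "nat \<Rightarrow> nat \<Rightarrow> nat \<Rightarrow> real" where
  "da_amp N n k =
     sqrt (fact n * fact (N - n) / (fact k * fact (N - k))) / sqrt (2 ^ N) *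
     (\<Sum>j\<in>{j. j \<le> k \<and> j \<le> n \<and> n - j \<le> N - k}.
        real (k choose j) * real ((N - k) choose (n - j)) * (- 1) ^ (N - k - (n - j)))"

definition P_HV :: "nat \<Rightarrow> real mat" where
  "P_HV N = mat (N + 1) (N + 1) (\<lambda>(i, j). if i = j \<and> 1 \<le> i \<and> 1 \<le> N - i then 1 else 0)"

text \<open>Double-click element in the D/A basis restricted to the N-photon block:
  sum over k with k \<ge> 1 and N-k \<ge> 1 of |k,N-k><k,N-k|_{D/A}.\<close>
definition P_DA :: "nat \<Rightarrow> real mat" where
  "P_DA N = mat (N + 1) (N + 1) (\<lambda>(i, j).
      \<Sum>k\<in>{k. k \<le> N \<and> 1 \<le> k \<and> 1 \<le> N - k}. da_amp N i k * da_amp N j k)"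

definition P_DC :: "nat \<Rightarrow> real \<Rightarrow> real mat" where
  "P_DC N pz = pz \<cdot>\<^sub>m P_HV N + (1 - pz) \<cdot>\<^sub>m P_DA N"

end

theory Submission
  imports Defs "HOL-Computational_Algebra.Polynomial"
begin

(* On the N-photon block (N >= 1), 1 - P_DC = p P + (1 - p) Q, where P and Q project onto the
   single-click planes span{|0,N>, |N,0>} of the H/V and of the D/A basis. All overlaps between
   the two planes are +-2^(-N/2), so the squared cosine k of their smallest principal angle is
   4 * 2^-N for even N and 2 * 2^-N for odd N. The largest eigenvalue of p P + (1 - p) Q is then
   L = 1/2 + 1/2 sqrt ((2p - 1)^2 + 4 k p (1 - p)), and lambda_min = 1 - L. An eigenvector for L
   is a combination of a principal pair of vectors of the two planes; conversely, the inequality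
   |Aw|^2 <= L <w, Aw> for A = p P + (1 - p) Q reduces, after expanding, to
   |<Pw, Qw>|^2 <= k <w, Pw> <w, Qw> and the AM-GM inequality. *)

lemma coeff_linear_poly_power_eq:
  "coeff ([:a, b:] ^ n) i = of_nat (n choose i) * b ^ i * (a :: 'a :: comm_semiring_1) ^ (n - i)"
proof (cases "i \<le> n")
  case True
  then show ?thesis by (rule coeff_linear_poly_power)
next
  case False
  have "degree ([:a, b:] ^ n) \<le> n"
    using degree_power_le[of "[:a, b:]" n] by (simp split: if_splits)
  with False show ?thesis by (simp add: coeff_eq_0 binomial_eq_0)
qed

(* The largest eigenvalue of p P + (1 - p) Q for orthogonal projections P, Q whose smallest
   principal angle has squared cosine k. *)
definition two_proj_max :: "real \<Rightarrow> real \<Rightarrow> real" where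
  "two_proj_max p k = 1/2 + 1/2 * sqrt ((2 * p - 1)^2 + 4 * k * (p * (1 - p)))"

lemma two_proj_max_ge:
  assumes "0 \<le> p" "p \<le> 1" "0 \<le> k"
  shows "p \<le> two_proj_max p k" "1 - p \<le> two_proj_max p k"
proof -
  have "0 \<le> k * (p * (1 - p))"
    using assms by simp
  then have "sqrt ((2 * p - 1)^2) \<le> sqrt ((2 * p - 1)^2 + 4 * k * (p * (1 - p)))"
    by (intro real_sqrt_le_mono) simp
  then have "\<bar>2 * p - 1\<bar> \<le> sqrt ((2 * p - 1)^2 + 4 * k * (p * (1 - p)))"
    by simp
  then show "p \<le> two_proj_max p k" "1 - p \<le> two_proj_max p k"
    unfolding two_proj_max_def by linarith+
qed

lemma two_proj_max_equation:
  assumes "0 \<le> p" "p \<le> 1" "0 \<le> k"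
  shows "(two_proj_max p k - p) * (two_proj_max p k - (1 - p)) = k * (p * (1 - p))"
proof -
  define r where "r = sqrt ((2 * p - 1)^2 + 4 * k * (p * (1 - p)))"
  have "r\<^sup>2 = (2 * p - 1)^2 + 4 * k * (p * (1 - p))"
    unfolding r_def using assms by (intro real_sqrt_pow2) simp
  then show ?thesis
    unfolding two_proj_max_def r_def[symmetric] by (simp add: power2_eq_square algebra_simps)
qed

lemma two_mult_le_add_if_square_le_mult:
  fixes a b t :: real
  assumes "0 \<le> a" "0 \<le> b" "t\<^sup>2 \<le> a * b"
  shows "2 * t \<le> a + b"
proof -
  have "(2 * t)\<^sup>2 \<le> (a + b)\<^sup>2"
    using assms(3) zero_le_power2[of "a - b"] by (simp add: power2_eq_square algebra_simps)
  then show ?thesis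
    using assms(1,2) abs_le_square_iff[of "2 * t" "a + b"] by simp
qed

(* For A = p P + (1 - p) Q with orthogonal projections P, Q and X = <w, Pw>, Y = <w, Qw>,
   s = <Pw, Qw>, this is |Aw|^2 <= L <w, Aw>. *)
lemma two_proj_max_rayleigh:
  fixes p k X Y s :: real
  assumes "0 \<le> p" "p \<le> 1" "0 \<le> k" "0 \<le> X" "0 \<le> Y" "s\<^sup>2 \<le> k * X * Y"
  shows "p\<^sup>2 * X + 2 * (p * (1 - p) * s) + (1 - p)\<^sup>2 * Y \<le> two_proj_max p k * (p * X + (1 - p) * Y)"
proof -
  define q where "q = 1 - p"
  define L where "L = two_proj_max p k"
  have Lp: "p \<le> L" and Lq: "q \<le> L"
    using two_proj_max_ge[OF assms(1-3)] by (simp_all add: L_def q_def)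
  have LL: "(L - p) * (L - q) = k * (p * q)"
    using two_proj_max_equation[OF assms(1-3)] by (simp add: L_def q_def)
  have "(p * q * s)\<^sup>2 \<le> (p * q)\<^sup>2 * (k * X * Y)"
    using assms(6) by (simp add: power_mult_distrib mult_left_mono)
  also have "\<dots> = p * q * X * Y * ((L - p) * (L - q))"
    unfolding LL by (simp add: power2_eq_square algebra_simps)
  also have "\<dots> = (p * (L - p) * X) * (q * (L - q) * Y)"
    by (simp add: algebra_simps)
  finally have "2 * (p * q * s) \<le> p * (L - p) * X + q * (L - q) * Y"
    using assms Lp Lq q_def by (intro two_mult_le_add_if_square_le_mult) simp_all
  then show ?thesis
    unfolding L_def[symmetric] q_def[symmetric] by (simp add: power2_eq_square algebra_simps)
qed

lemma cauchy_schwarz_two: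
  fixes x y u v :: real
  shows "(x * u + y * v)\<^sup>2 \<le> (x\<^sup>2 + y\<^sup>2) * (u\<^sup>2 + v\<^sup>2)"
proof -
  have "(x\<^sup>2 + y\<^sup>2) * (u\<^sup>2 + v\<^sup>2) - (x * u + y * v)\<^sup>2 = (x * v - y * u)\<^sup>2"
    by (simp add: power2_eq_square algebra_simps)
  then show ?thesis
    using zero_le_power2[of "x * v - y * u"] by linarith
qed

lemma click_overlap_matrix_bound:
  fixes a b x y :: real
  shows "(a * ((- 1) ^ N * x + y) + b * (x + y))\<^sup>2 \<le> (if even N then 4 else 2) * (a\<^sup>2 + b\<^sup>2) * (x\<^sup>2 + y\<^sup>2)"
proof (cases "even N")
  case True
  have "(a + b)\<^sup>2 * (x + y)\<^sup>2 \<le> (2 * (a\<^sup>2 + b\<^sup>2)) * (2 * (x\<^sup>2 + y\<^sup>2))"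
    using cauchy_schwarz_two[of a 1 b 1] cauchy_schwarz_two[of x 1 y 1]
    by (intro mult_mono) (simp_all add: algebra_simps)
  with True show ?thesis
    by (simp add: power2_eq_square algebra_simps)
next
  case False
  have "(a * (y - x) + b * (x + y))\<^sup>2 \<le> (a\<^sup>2 + b\<^sup>2) * ((y - x)\<^sup>2 + (x + y)\<^sup>2)"
    by (rule cauchy_schwarz_two)
  with False show ?thesis
    by (simp add: power2_eq_square algebra_simps)
qed

(* Expanding |k,N-k>_{D/A} ~ (a_H^dag + a_V^dag)^k (a_H^dag - a_V^dag)^(N-k) |vac> and setting
   a_V^dag := 1, the coefficient of X^n carries the |n,N-n>_{H/V} amplitude. *)
definition da_poly :: "nat \<Rightarrow> nat \<Rightarrow> real poly" where
  "da_poly N k = [:1, 1:] ^ k * [:-1, 1:] ^ (N - k)"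

lemma da_amp_eq_coeff_da_poly:
  "da_amp N n k =
     sqrt (fact n * fact (N - n)) / sqrt (fact k * fact (N - k)) / sqrt (2 ^ N) * coeff (da_poly N k) n"
proof -
  have "coeff (da_poly N k) n =
      (\<Sum>j\<le>n. real (k choose j) * real ((N - k) choose (n - j)) * (- 1) ^ (N - k - (n - j)))"
    by (simp add: da_poly_def coeff_mult coeff_linear_poly_power_eq mult.assoc)
  also have "\<dots> = (\<Sum>j\<in>{j. j \<le> k \<and> j \<le> n \<and> n - j \<le> N - k}.
      real (k choose j) * real ((N - k) choose (n - j)) * (- 1) ^ (N - k - (n - j)))"
    by (rule sum.mono_neutral_right) (auto simp: binomial_eq_0)
  finally show ?thesis
    by (simp add: da_amp_def real_sqrt_divide)
qed

lemma da_poly_generating_function: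
  "(\<Sum>k\<le>N. Polynomial.smult (real (N choose k) * poly (da_poly N k) y) (da_poly N k)) = [:2, 2 * y:] ^ N"
proof -
  have "Polynomial.smult (real (N choose k) * poly (da_poly N k) y) (da_poly N k) =
      of_nat (N choose k) * [:1 + y, 1 + y:] ^ k * [:1 - y, y - 1:] ^ (N - k)" for k
  proof -
    have "[:1 + y, 1 + y:] ^ k = Polynomial.smult ((1 + y) ^ k) ([:1, 1:] ^ k)"
      by (simp add: Polynomial.smult_power[symmetric])
    moreover have "[:1 - y, y - 1:] ^ (N - k) = Polynomial.smult ((y - 1) ^ (N - k)) ([:-1, 1:] ^ (N - k))"
      by (simp add: Polynomial.smult_power[symmetric] algebra_simps)
    ultimately show ?thesis
      by (simp add: da_poly_def poly_power of_nat_poly algebra_simps)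
  qed
  then have "(\<Sum>k\<le>N. Polynomial.smult (real (N choose k) * poly (da_poly N k) y) (da_poly N k)) =
      (\<Sum>k\<le>N. of_nat (N choose k) * [:1 + y, 1 + y:] ^ k * [:1 - y, y - 1:] ^ (N - k))"
    by simp
  also have "\<dots> = ([:1 + y, 1 + y:] + [:1 - y, y - 1:]) ^ N"
    by (rule binomial_ring[symmetric])
  finally show ?thesis by simp
qed

lemma coeff_da_poly_orthogonal:
  "(\<Sum>k\<le>N. real (N choose k) * coeff (da_poly N k) n * coeff (da_poly N k) m) =
     (if m = n then real (N choose n) * 2 ^ N else 0)"
proof -
  define G where "G = (\<Sum>k\<le>N. Polynomial.smult (real (N choose k) * coeff (da_poly N k) n) (da_poly N k))"
  have "poly G y = poly (monom (real (N choose n) * 2 ^ N) n) y" for y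
  proof -
    have "poly G y = coeff ([:2, 2 * y:] ^ N) n"
      unfolding da_poly_generating_function[symmetric] coeff_sum G_def poly_sum
      by (simp add: algebra_simps)
    also have "\<dots> = poly (monom (real (N choose n) * 2 ^ N) n) y"
      by (cases "n \<le> N") (simp_all add: coeff_linear_poly_power_eq poly_monom power_mult_distrib
            power_add[symmetric] binomial_eq_0)
    finally show ?thesis .
  qed
  then have "G = monom (real (N choose n) * 2 ^ N) n"
    using poly_eq_poly_eq_iff by blast
  then have "coeff G m = coeff (monom (real (N choose n) * 2 ^ N) n) m"
    by (rule arg_cong)
  then show ?thesis
    by (simp add: G_def coeff_sum coeff_monom algebra_simps)
qed

lemma da_amp_rows_orthonormal:
  assumes "n \<le> N" "m \<le> N"
  shows "(\<Sum>k\<le>N. da_amp N n k * da_amp N m k) = (if n = m then 1 else 0)"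
proof -
  define K where "K = sqrt (fact n * fact (N - n)) * sqrt (fact m * fact (N - m)) / (2 ^ N * fact N)"
  have "da_amp N n k * da_amp N m k =
      K * (real (N choose k) * coeff (da_poly N k) n * coeff (da_poly N k) m)" if "k \<le> N" for k
  proof -
    have "sqrt (fact k * fact (N - k)) * sqrt (fact k * fact (N - k)) = (fact k * fact (N - k) :: real)"
      by simp
    then show ?thesis
      unfolding da_amp_eq_coeff_da_poly K_def binomial_fact[OF that]
      by (simp add: field_simps)
  qed
  then have "(\<Sum>k\<le>N. da_amp N n k * da_amp N m k) =
      K * (\<Sum>k\<le>N. real (N choose k) * coeff (da_poly N k) n * coeff (da_poly N k) m)"
    by (simp add: sum_distrib_left)
  also have "\<dots> = K * (if m = n then real (N choose n) * 2 ^ N else 0)"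
    by (simp only: coeff_da_poly_orthogonal)
  also have "\<dots> = (if n = m then 1 else 0)"
  proof (cases "n = m")
    case True
    have "sqrt (fact n * fact (N - n)) * sqrt (fact n * fact (N - n)) = (fact n * fact (N - n) :: real)"
      by simp
    with True show ?thesis
      unfolding K_def binomial_fact[OF assms(1)] by (simp add: field_simps)
  qed simp
  finally show ?thesis .
qed

lemma sqrt_fact_mult_binomial:
  assumes "n \<le> N"
  shows "sqrt (fact n * fact (N - n)) / sqrt (fact N) * real (N choose n) = sqrt (real (N choose n))"
proof -
  define a :: real where "a = fact n * fact (N - n)"
  define F :: real where "F = fact N"
  have "a > 0" "F > 0" by (simp_all add: a_def F_def)
  then have "sqrt a / sqrt F * (F / a) = sqrt (F / a)"
    by (simp add: field_simps real_sqrt_divide real_sqrt_mult[symmetric])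
  then show ?thesis by (simp add: a_def F_def binomial_fact[OF assms])
qed

lemma da_amp_all_A:
  "n \<le> N \<Longrightarrow> da_amp N n 0 = (- 1) ^ (N - n) * sqrt (real (N choose n) / 2 ^ N)"
  using sqrt_fact_mult_binomial[of n N]
  by (simp add: da_amp_eq_coeff_da_poly da_poly_def coeff_linear_poly_power_eq real_sqrt_divide field_simps)

lemma da_amp_all_D: "n \<le> N \<Longrightarrow> da_amp N n N = sqrt (real (N choose n) / 2 ^ N)"
  using sqrt_fact_mult_binomial[of n N]
  by (simp add: da_amp_eq_coeff_da_poly da_poly_def coeff_linear_poly_power_eq real_sqrt_divide field_simps)

definition inner_upto :: "nat \<Rightarrow> (nat \<Rightarrow> real) \<Rightarrow> (nat \<Rightarrow> real) \<Rightarrow> real" where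
  "inner_upto N f g = (\<Sum>i\<le>N. f i * g i)"

abbreviation all_A :: "nat \<Rightarrow> nat \<Rightarrow> real" where
  "all_A N \<equiv> \<lambda>i. da_amp N i 0"

abbreviation all_D :: "nat \<Rightarrow> nat \<Rightarrow> real" where
  "all_D N \<equiv> \<lambda>i. da_amp N i N"

lemma inner_upto_commute: "inner_upto N f g = inner_upto N g f"
  by (simp add: inner_upto_def mult.commute)

lemma inner_upto_linear_right:
  "inner_upto N f (\<lambda>i. x * g i + y * h i) = x * inner_upto N f g + y * inner_upto N f h"
  by (simp add: inner_upto_def sum.distrib sum_distrib_left algebra_simps)

lemma all_A_all_D_ends:
  fixes N :: nat
  defines "c \<equiv> sqrt ((1/2)^N)"
  shows "all_A N 0 = (- 1) ^ N * c" "all_A N N = c" "all_D N 0 = c" "all_D N N = c"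
  by (simp_all add: c_def da_amp_all_A da_amp_all_D power_one_over)

lemma inner_all_A_all_A: "inner_upto N (all_A N) (all_A N) = 1"
proof -
  have "inner_upto N (all_A N) (all_A N) = (\<Sum>i\<le>N. real (N choose i) / 2 ^ N)"
    unfolding inner_upto_def by (rule sum.cong) (simp_all add: da_amp_all_A mult_ac)
  also have "\<dots> = real (\<Sum>i\<le>N. N choose i) / 2 ^ N"
    by (simp add: sum_divide_distrib)
  finally show ?thesis by (simp add: choose_row_sum)
qed

lemma inner_all_D_all_D: "inner_upto N (all_D N) (all_D N) = 1"
proof -
  have "inner_upto N (all_D N) (all_D N) = (\<Sum>i\<le>N. real (N choose i) / 2 ^ N)"
    unfolding inner_upto_def by (rule sum.cong) (simp_all add: da_amp_all_D)
  also have "\<dots> = real (\<Sum>i\<le>N. N choose i) / 2 ^ N"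
    by (simp add: sum_divide_distrib)
  finally show ?thesis by (simp add: choose_row_sum)
qed

lemma inner_all_A_all_D:
  assumes "1 \<le> N"
  shows "inner_upto N (all_A N) (all_D N) = 0"
proof -
  have "inner_upto N (all_A N) (all_D N) = (- 1) ^ N * (\<Sum>i\<le>N. (- 1) ^ i * real (N choose i)) / 2 ^ N"
    unfolding inner_upto_def sum_distrib_left sum_divide_distrib
  proof (rule sum.cong)
    fix i assume "i \<in> {..N}"
    then have "(- 1 :: real) ^ N = (- 1) ^ (N - i) * (- 1) ^ i"
      by (simp flip: power_add)
    then show "da_amp N i 0 * da_amp N i N = (- 1) ^ N * ((- 1) ^ i * real (N choose i)) / 2 ^ N"
      using \<open>i \<in> {..N}\<close> by (simp add: da_amp_all_A da_amp_all_D mult_ac)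
  qed simp
  also have "\<dots> = 0"
    using assms by (simp add: choose_alternating_sum)
  finally show ?thesis .
qed

definition hv_single :: "nat \<Rightarrow> (nat \<Rightarrow> real) \<Rightarrow> nat \<Rightarrow> real" where
  "hv_single N w i = (if i = 0 then w 0 else 0) + (if i = N then w N else 0)"

definition da_single :: "nat \<Rightarrow> (nat \<Rightarrow> real) \<Rightarrow> nat \<Rightarrow> real" where
  "da_single N w i = inner_upto N (all_A N) w * all_A N i + inner_upto N (all_D N) w * all_D N i"

(* For N >= 1, single_click N p is the N-photon block of 1 - P_DC: in either basis the
   single-click outcomes are |0,N> and |N,0>. *)
definition single_click :: "nat \<Rightarrow> real \<Rightarrow> (nat \<Rightarrow> real) \<Rightarrow> nat \<Rightarrow> real" where
  "single_click N p w i = p * hv_single N w i + (1 - p) * da_single N w i"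

lemma dim_P_HV_P_DA_P_DC [simp]:
  "dim_row (P_HV N) = N + 1" "dim_col (P_HV N) = N + 1"
  "dim_row (P_DA N) = N + 1" "dim_col (P_DA N) = N + 1"
  "dim_row (P_DC N p) = N + 1" "dim_col (P_DC N p) = N + 1"
  by (simp_all add: P_HV_def P_DA_def P_DC_def)

lemma mult_vec_index_sum:
  assumes "dim_row A = N + 1" "dim_col A = N + 1" "v \<in> carrier_vec (N + 1)" "i \<le> N"
  shows "(A *\<^sub>v v) $ i = (\<Sum>j\<le>N. A $$ (i, j) * v $ j)"
  using assms by (simp add: scalar_prod_def atLeast0LessThan lessThan_Suc_atMost)

lemma P_HV_mult_vec:
  assumes "1 \<le> N" "v \<in> carrier_vec (N + 1)" "i \<le> N"
  shows "(P_HV N *\<^sub>v v) $ i = v $ i - hv_single N (($) v) i"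
proof -
  have "(P_HV N *\<^sub>v v) $ i = (\<Sum>j\<le>N. (if j = i \<and> 1 \<le> i \<and> 1 \<le> N - i then v $ j else 0))"
    using assms(2,3) by (subst mult_vec_index_sum) (auto simp: P_HV_def intro!: sum.cong)
  also have "\<dots> = v $ i - hv_single N (($) v) i"
    using assms(1,3) by (cases "1 \<le> i \<and> 1 \<le> N - i") (auto simp: hv_single_def)
  finally show ?thesis .
qed

lemma P_DA_index:
  assumes "1 \<le> N" "i \<le> N" "j \<le> N"
  shows "P_DA N $$ (i, j) = (if i = j then 1 else 0) - all_A N i * all_A N j - all_D N i * all_D N j"
proof -
  have "{..N} = insert 0 (insert N {k. k \<le> N \<and> 1 \<le> k \<and> 1 \<le> N - k})"
    using assms(1) by auto
  then have "(\<Sum>k\<le>N. da_amp N i k * da_amp N j k) = all_A N i * all_A N j + all_D N i * all_D N j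
      + (\<Sum>k\<in>{k. k \<le> N \<and> 1 \<le> k \<and> 1 \<le> N - k}. da_amp N i k * da_amp N j k)"
    using assms(1) by (simp add: algebra_simps)
  then show ?thesis
    using assms by (simp add: P_DA_def da_amp_rows_orthonormal)
qed

lemma P_DA_mult_vec:
  assumes "1 \<le> N" "v \<in> carrier_vec (N + 1)" "i \<le> N"
  shows "(P_DA N *\<^sub>v v) $ i = v $ i - da_single N (($) v) i"
proof -
  have "(P_DA N *\<^sub>v v) $ i = (\<Sum>j\<le>N. (if i = j then v $ j else 0)
      - all_A N i * (all_A N j * v $ j) - all_D N i * (all_D N j * v $ j))"
    using assms by (subst mult_vec_index_sum) (auto simp: P_DA_index algebra_simps intro!: sum.cong)
  also have "\<dots> = v $ i - da_single N (($) v) i"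
    using assms(3)
    by (simp add: da_single_def inner_upto_def sum_subtractf sum_distrib_left mult.commute)
  finally show ?thesis .
qed

lemma P_DC_mult_vec:
  assumes "1 \<le> N" "v \<in> carrier_vec (N + 1)" "i \<le> N"
  shows "(P_DC N p *\<^sub>v v) $ i = v $ i - single_click N p (($) v) i"
proof -
  have entry: "P_DC N p $$ (i, j) = p * P_HV N $$ (i, j) + (1 - p) * P_DA N $$ (i, j)"
    if "j \<le> N" for j
    using assms(3) that by (simp add: P_DC_def)
  have "(P_DC N p *\<^sub>v v) $ i = p * (P_HV N *\<^sub>v v) $ i + (1 - p) * (P_DA N *\<^sub>v v) $ i"
    by (simp only: mult_vec_index_sum[OF _ _ assms(2,3)] dim_P_HV_P_DA_P_DC)
      (simp add: entry sum.distrib sum_distrib_left mult.assoc distrib_right)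
  also have "\<dots> = v $ i - single_click N p (($) v) i"
    unfolding P_HV_mult_vec[OF assms] P_DA_mult_vec[OF assms] single_click_def
    by (simp add: algebra_simps)
  finally show ?thesis .
qed

lemma inner_upto_hv_single:
  assumes "1 \<le> N"
  shows "inner_upto N f (hv_single N w) = f 0 * w 0 + f N * w N"
proof -
  have expand: "(\<lambda>i. f i * hv_single N w i) =
      (\<lambda>i. (if i = 0 then f 0 * w 0 else 0) + (if i = N then f N * w N else 0))"
    by (simp add: hv_single_def fun_eq_iff)
  then show ?thesis
    unfolding inner_upto_def expand using assms by (simp add: sum.distrib)
qed

lemma inner_upto_da_single:
  "inner_upto N f (da_single N w) =
     inner_upto N (all_A N) w * inner_upto N f (all_A N) + inner_upto N (all_D N) w * inner_upto N f (all_D N)"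
  using inner_upto_linear_right[of N f _ "all_A N" _ "all_D N"]
  by (simp add: da_single_def[abs_def])

lemma inner_hv_single_self:
  "1 \<le> N \<Longrightarrow> inner_upto N (hv_single N w) (hv_single N w) = inner_upto N w (hv_single N w)"
  by (simp add: inner_upto_hv_single hv_single_def)

lemma inner_da_single_self:
  "1 \<le> N \<Longrightarrow> inner_upto N (da_single N w) (da_single N w) = inner_upto N w (da_single N w)"
  by (simp add: inner_upto_da_single inner_upto_commute[of N "da_single N w"]
      inner_upto_commute[of N "all_D N" "all_A N"] inner_upto_commute[of N w]
      inner_all_A_all_A inner_all_D_all_D inner_all_A_all_D)

(* The overlap matrix of the two single-click planes is 2^(-N/2) [[(-1)^N, 1], [1, 1]]; its
   largest squared singular value is click_overlap N. *)
definition click_overlap :: "nat \<Rightarrow> real" where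
  "click_overlap N = (if even N then 4 else 2) * (1/2)^N"

lemma hv_da_overlap:
  assumes "1 \<le> N"
  shows "(inner_upto N (hv_single N w) (da_single N w))\<^sup>2 \<le>
    click_overlap N * inner_upto N w (hv_single N w) * inner_upto N w (da_single N w)"
proof -
  define c where "c = sqrt ((1/2::real)^N)"
  define a where "a = inner_upto N (all_A N) w"
  define b where "b = inner_upto N (all_D N) w"
  have s: "inner_upto N (hv_single N w) (da_single N w) = c * (a * ((- 1) ^ N * w 0 + w N) + b * (w 0 + w N))"
    using assms
    by (simp add: inner_upto_commute[of N "hv_single N w"] inner_upto_hv_single da_single_def
        all_A_all_D_ends a_def b_def c_def algebra_simps)
  have X: "inner_upto N w (hv_single N w) = (w 0)\<^sup>2 + (w N)\<^sup>2"
    using assms by (simp add: inner_upto_hv_single power2_eq_square)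
  have Y: "inner_upto N w (da_single N w) = a\<^sup>2 + b\<^sup>2"
    by (simp add: inner_upto_da_single inner_upto_commute[of N w] a_def b_def power2_eq_square)
  have "(inner_upto N (hv_single N w) (da_single N w))\<^sup>2 =
      c\<^sup>2 * (a * ((- 1) ^ N * w 0 + w N) + b * (w 0 + w N))\<^sup>2"
    unfolding s by (simp add: power_mult_distrib)
  also have "\<dots> \<le> c\<^sup>2 * ((if even N then 4 else 2) * (a\<^sup>2 + b\<^sup>2) * ((w 0)\<^sup>2 + (w N)\<^sup>2))"
    by (rule mult_left_mono[OF click_overlap_matrix_bound]) simp
  also have "\<dots> = click_overlap N * inner_upto N w (hv_single N w) * inner_upto N w (da_single N w)"
    unfolding X Y click_overlap_def by (simp add: c_def)
  finally show ?thesis .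
qed

lemma single_click_rayleigh:
  assumes "0 \<le> p" "p \<le> 1" "1 \<le> N"
  shows "inner_upto N (single_click N p w) (single_click N p w) \<le>
    two_proj_max p (click_overlap N) * inner_upto N w (single_click N p w)"
proof -
  define q where "q = 1 - p"
  define P where "P = hv_single N w"
  define Q where "Q = da_single N w"
  define X where "X = inner_upto N w P"
  define Y where "Y = inner_upto N w Q"
  define s where "s = inner_upto N P Q"
  have A: "single_click N p w = (\<lambda>i. p * P i + q * Q i)"
    by (simp add: fun_eq_iff single_click_def P_def Q_def q_def)
  have PP: "inner_upto N P P = X" and QQ: "inner_upto N Q Q = Y"
    using assms(3) by (simp_all add: P_def Q_def X_def Y_def inner_hv_single_self inner_da_single_self)
  have F: "inner_upto N w (single_click N p w) = p * X + q * Y"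
    by (simp add: A inner_upto_linear_right X_def Y_def)
  have SP: "inner_upto N (single_click N p w) P = p * X + q * s"
    unfolding A inner_upto_commute[of N "\<lambda>i. p * P i + q * Q i" P] inner_upto_linear_right PP s_def ..
  have SQ: "inner_upto N (single_click N p w) Q = p * s + q * Y"
    unfolding A inner_upto_commute[of N "\<lambda>i. p * P i + q * Q i" Q] inner_upto_linear_right QQ s_def
    by (simp add: inner_upto_commute[of N Q P])
  have Z: "inner_upto N (single_click N p w) (single_click N p w) = p\<^sup>2 * X + 2 * (p * q * s) + q\<^sup>2 * Y"
    by (subst (2) A) (simp add: inner_upto_linear_right SP SQ power2_eq_square algebra_simps)
  have "0 \<le> click_overlap N"
    by (simp add: click_overlap_def)
  moreover have "0 \<le> X"
    using assms(3) by (simp add: X_def P_def inner_upto_hv_single)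
  moreover have "0 \<le> Y"
    by (simp add: Y_def Q_def inner_upto_da_single inner_upto_commute[of N w])
  moreover have "s\<^sup>2 \<le> click_overlap N * X * Y"
    unfolding s_def X_def Y_def P_def Q_def by (rule hv_da_overlap[OF assms(3)])
  ultimately show ?thesis
    unfolding Z F q_def by (rule two_proj_max_rayleigh[OF assms(1,2)])
qed

lemma single_click_eigenvalue_le:
  assumes "0 \<le> p" "p \<le> 1" "1 \<le> N"
    and eig: "\<And>i. i \<le> N \<Longrightarrow> single_click N p w i = s * w i"
    and "j \<le> N" "w j \<noteq> 0"
  shows "s \<le> two_proj_max p (click_overlap N)"
proof -
  define L where "L = two_proj_max p (click_overlap N)"
  define W where "W = inner_upto N w w"
  have "0 < w j * w j"
    using \<open>w j \<noteq> 0\<close> not_real_square_gt_zero by blast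
  also have "\<dots> \<le> W"
    unfolding W_def inner_upto_def using \<open>j \<le> N\<close> by (intro member_le_sum) auto
  finally have W: "0 < W" .
  have "inner_upto N w (single_click N p w) = s * W"
    by (simp add: W_def inner_upto_def eig sum_distrib_left algebra_simps)
  moreover have "inner_upto N (single_click N p w) (single_click N p w) = s * s * W"
    by (simp add: W_def inner_upto_def eig sum_distrib_left algebra_simps)
  ultimately have "s * s * W \<le> L * (s * W)"
    using single_click_rayleigh[OF assms(1-3), of w] by (simp add: L_def)
  then have "s * s \<le> L * s"
    using W by (simp add: algebra_simps)
  moreover have "0 \<le> L"
    using two_proj_max_ge[OF assms(1,2), of "click_overlap N"] assms(1)
    by (simp add: L_def click_overlap_def)
  ultimately show ?thesis
    unfolding L_def[symmetric] by (cases "s > 0") (simp_all add: not_less)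
qed

definition hv_principal :: "nat \<Rightarrow> nat \<Rightarrow> real" where
  "hv_principal N i = (if i = 0 \<and> even N then 1 else 0) + (if i = N then 1 else 0)"

definition da_principal :: "nat \<Rightarrow> nat \<Rightarrow> real" where
  "da_principal N i = all_A N i + all_D N i"

(* hv_principal N and da_principal N are principal vectors of the two single-click planes:
   P maps the second to 2 c times the first, Q maps the first to g times the second. *)
lemma single_click_principal_plane:
  assumes "1 \<le> N" and c_def: "c = sqrt ((1/2)^N)" and g_def: "g = (if even N then 2 * c else c)"
  shows "single_click N p (\<lambda>j. x * hv_principal N j + y * da_principal N j) i =
    p * (x + 2 * c * y) * hv_principal N i + (1 - p) * (g * x + y) * da_principal N i"
proof -
  define f where "f = (\<lambda>j. x * hv_principal N j + y * da_principal N j)"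
  have N0: "N \<noteq> 0"
    using assms(1) by simp
  note ends = all_A_all_D_ends[of N, folded c_def]
  have hv: "hv_single N f i = (x + 2 * c * y) * hv_principal N i"
    by (cases "even N") (simp_all add: hv_single_def f_def hv_principal_def da_principal_def ends N0
        algebra_simps)
  have "hv_single N (hv_principal N) = hv_principal N"
    by (simp add: fun_eq_iff hv_single_def hv_principal_def N0)
  then have "inner_upto N (all_A N) (hv_principal N) = g" "inner_upto N (all_D N) (hv_principal N) = g"
    using inner_upto_hv_single[OF assms(1), of _ "hv_principal N"] N0
    by (auto simp: hv_principal_def ends g_def)
  moreover have "inner_upto N (all_A N) (da_principal N) = 1" "inner_upto N (all_D N) (da_principal N) = 1"
    using inner_all_A_all_A inner_all_D_all_D inner_all_A_all_D[OF assms(1)]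
      inner_upto_commute[of N "all_A N" "all_D N"]
      inner_upto_linear_right[of N _ 1 "all_A N" 1 "all_D N"]
    by (simp_all add: da_principal_def[abs_def])
  ultimately have da: "da_single N f i = (g * x + y) * da_principal N i"
    unfolding da_single_def f_def inner_upto_linear_right
    by (simp add: da_principal_def[of N i] algebra_simps)
  show ?thesis
    using hv da by (simp add: single_click_def f_def)
qed

lemma single_click_top_eigenvector:
  assumes "0 \<le> p" "p \<le> 1" "1 \<le> N"
  obtains f where "f N \<noteq> 0" "\<And>i. single_click N p f i = two_proj_max p (click_overlap N) * f i"
proof -
  define c where "c = sqrt ((1/2::real)^N)"
  define g where "g = (if even N then 2 * c else c)"
  define L where "L = two_proj_max p (click_overlap N)"
  define x where "x = 2 * c * p"
  define y where "y = L - p"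
  define f where "f = (\<lambda>j. x * hv_principal N j + y * da_principal N j)"
  have c: "0 < c" "c * c = (1/2)^N"
    by (simp_all add: c_def)
  then have "click_overlap N = 2 * c * g"
    by (simp add: click_overlap_def g_def)
  moreover have "0 \<le> click_overlap N"
    by (simp add: click_overlap_def)
  ultimately have Lp: "p \<le> L" and Lq: "1 - p \<le> L"
    and LL: "(L - p) * (L - (1 - p)) = 2 * c * g * (p * (1 - p))"
    using two_proj_max_ge[OF assms(1,2)] two_proj_max_equation[OF assms(1,2)]
    by (simp_all add: L_def)
  have px: "p * (x + 2 * c * y) = L * x"
    by (simp add: x_def y_def algebra_simps)
  have qy: "(1 - p) * (g * x + y) = L * y"
    using LL by (simp add: x_def y_def algebra_simps)
  have "single_click N p f i = L * f i" for i
    unfolding f_def single_click_principal_plane[OF assms(3) c_def g_def] px qy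
    by (simp add: algebra_simps)
  moreover have "f N \<noteq> 0"
    using c(1) Lp Lq assms(3)
    by (simp add: f_def hv_principal_def da_principal_def all_A_all_D_ends x_def y_def c_def
        algebra_simps)
  ultimately show ?thesis
    using that by (simp add: L_def)
qed

lemma single_click_cong:
  "(\<And>j. j \<le> N \<Longrightarrow> w j = w' j) \<Longrightarrow> single_click N p w i = single_click N p w' i"
  by (simp add: single_click_def hv_single_def da_single_def inner_upto_def)

lemma eigenvalue_P_DC_if_single_click:
  assumes "1 \<le> N" "f N \<noteq> 0" "\<And>i. single_click N p f i = s * f i"
  shows "eigenvalue (P_DC N p) (1 - s)"
proof -
  have "P_DC N p *\<^sub>v vec (N + 1) f = (1 - s) \<cdot>\<^sub>v vec (N + 1) f"
  proof (rule eq_vecI)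
    fix i assume "i < dim_vec ((1 - s) \<cdot>\<^sub>v vec (N + 1) f)"
    then have "i \<le> N" by simp
    then show "(P_DC N p *\<^sub>v vec (N + 1) f) $ i = ((1 - s) \<cdot>\<^sub>v vec (N + 1) f) $ i"
      using P_DC_mult_vec[OF assms(1), of "vec (N + 1) f" i p]
        single_click_cong[of N "($) (vec (N + 1) f)" f p i]
      by (simp add: assms(3) algebra_simps)
  qed simp
  moreover have "vec (N + 1) f \<noteq> 0\<^sub>v (N + 1)"
    using assms(2) by (metis index_vec index_zero_vec(1) less_add_one)
  ultimately show ?thesis
    unfolding eigenvalue_def eigenvector_def by (intro exI[of _ "vec (N + 1) f"]) simp
qed

lemma single_click_if_eigenvalue_P_DC:
  assumes "1 \<le> N" "eigenvalue (P_DC N p) \<mu>"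
  obtains w j where "j \<le> N" "w j \<noteq> 0" "\<And>i. i \<le> N \<Longrightarrow> single_click N p w i = (1 - \<mu>) * w i"
proof -
  obtain u where u: "u \<in> carrier_vec (N + 1)" "u \<noteq> 0\<^sub>v (N + 1)" "P_DC N p *\<^sub>v u = \<mu> \<cdot>\<^sub>v u"
    using assms(2) by (auto simp: eigenvalue_def eigenvector_def)
  have "single_click N p (($) u) i = (1 - \<mu>) * u $ i" if "i \<le> N" for i
  proof -
    have "(P_DC N p *\<^sub>v u) $ i = \<mu> * u $ i"
      using u(1,3) that by simp
    then show ?thesis
      unfolding P_DC_mult_vec[OF assms(1) u(1) that] by (simp add: algebra_simps)
  qed
  moreover obtain j where "j \<le> N" "u $ j \<noteq> 0"
    using u(1,2) by (metis carrier_vecD eq_vecI index_zero_vec(1,2) less_Suc_eq_le Suc_eq_plus1)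
  ultimately show ?thesis
    using that by blast
qed

theorem lemma2:
  fixes N :: nat and pz :: real
  assumes "0 \<le> pz" and "pz \<le> 1" and "1 \<le> N"
  defines "lmin \<equiv> (if odd N
       then 1/2 - 1/2 * sqrt ((2*pz - 1)^2 + 8 * (1/2)^N * (pz - pz^2))
       else 1/2 - 1/2 * sqrt ((2*pz - 1)^2 + 16 * (1/2)^N * (pz - pz^2)))"
  shows "eigenvalue (P_DC N pz) lmin \<and> (\<forall>\<mu>. eigenvalue (P_DC N pz) \<mu> \<longrightarrow> lmin \<le> \<mu>)"
proof -
  define L where "L = two_proj_max pz (click_overlap N)"
  have lmin: "lmin = 1 - L"
    unfolding lmin_def L_def two_proj_max_def click_overlap_def
    by (simp add: power2_eq_square algebra_simps)
  obtain f where "f N \<noteq> 0" "\<And>i. single_click N pz f i = L * f i"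
    using single_click_top_eigenvector[OF assms(1-3)] unfolding L_def by blast
  then have "eigenvalue (P_DC N pz) lmin"
    unfolding lmin by (rule eigenvalue_P_DC_if_single_click[OF assms(3)])
  moreover have "lmin \<le> \<mu>" if ev: "eigenvalue (P_DC N pz) \<mu>" for \<mu>
  proof -
    obtain w j where "j \<le> N" "w j \<noteq> 0" "\<And>i. i \<le> N \<Longrightarrow> single_click N pz w i = (1 - \<mu>) * w i"
      using single_click_if_eigenvalue_P_DC[OF assms(3) ev] by blast
    then have "1 - \<mu> \<le> L"
      unfolding L_def using single_click_eigenvalue_le[OF assms(1-3)] by blast
    then show ?thesis
      by (simp add: lmin)
  qed
  ultimately show ?thesis
    by blast
qed

end
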